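(* Let $a_{n,k}$ denote the number of matchings of size $n$ containing exactly $k$ occurrences of the endhered pattern $21$ (equivalently, the same numbers for the pattern $12$), with $a_{n,k}$ defined for all integers $k$. Then for $n\ge1$ and all integers $k$, $$a_{n+1,k}=a_{n,k-1}+2(n-k)\,a_{n,k}+2(k+1)\,a_{n,k+1},$$ with $a_{1,0}=1$ and $a_{1,k}=0$ for $k\ne 0$. In particular $a_{n,k}=0$ whenever $k<0$.
   Context: A matching of size $n$ is a set of $n$ arcs $(a,b)$ with $1\le a<b\le 2n$ such that each point of $\{1,\dots,2n\}$ belongs to exactly one arc. An occurrence of the endhered pattern $21$ in a matching $\mu$ is a pair of arcs of $\mu$ of the form $(i+1,j+2),(i+2,j+1)$ (two nested arcs whose starting points are consecutive and whose ending points are consecutive); an occurrence of $12$ is a pair of arcs of the form $(i+1,j+1),(i+2,j+2)$ (two crossing arcs with consecutive starting points and consecutive ending points). The number of occurrences is the number of such pairs. *)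

theory Defs
  imports Main
begin

definition is_matching :: "nat \<Rightarrow> (nat \<times> nat) set \<Rightarrow> bool" where
  "is_matching n M \<longleftrightarrow>
     M \<subseteq> {(a, b). 1 \<le> a \<and> a < b \<and> b \<le> 2 * n} \<and>
     (\<forall>p \<in> {1..2 * n}. \<exists>!e. e \<in> M \<and> (fst e = p \<or> snd e = p))"

definition occ21 :: "(nat \<times> nat) set \<Rightarrow> nat" where
  "occ21 M = card {(i, j). (i + 1, j + 2) \<in> M \<and> (i + 2, j + 1) \<in> M}"

definition occ12 :: "(nat \<times> nat) set \<Rightarrow> nat" where
  "occ12 M = card {(i, j). (i + 1, j + 1) \<in> M \<and> (i + 2, j + 2) \<in> M}"

definition a21 :: "nat \<Rightarrow> int \<Rightarrow> int" where
  "a21 n k = int (card {M. is_matching n M \<and> int (occ21 M) = k})"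

definition a12 :: "nat \<Rightarrow> int \<Rightarrow> int" where
  "a12 n k = int (card {M. is_matching n M \<and> int (occ12 M) = k})"

end

theory Submission
  imports Defs
begin

text \<open>
  Every matching of size n + 1 arises in exactly one way from a matching M of size n and a gap
  g \<in> {0..2n} of M: open a new point in the gap, put a new point in front of everything, and
  join the two new points by an arc. An occurrence of a pattern in M survives this operation unless
  the gap separates its two consecutive starting points or its two consecutive ending points; every
  occurrence is separated by exactly two gaps and every gap separates at most one occurrence.
  Moreover, if n \<ge> 1, exactly one gap lets the new arc form an additional occurrence with the arc
  at point 1 of M, and that gap separates nothing. So a matching with k occurrences has one
  extension with k + 1, 2k extensions with k - 1 and 2n - 2k extensions with k occurrences. The
  argument is the same for 12 and 21, so both counts satisfy the same recurrence.
\<close>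

section \<open>Perfect matchings of a finite set of points\<close>

definition perfect_matching_on :: "nat set \<Rightarrow> (nat \<times> nat) set \<Rightarrow> bool" where
  "perfect_matching_on P M \<longleftrightarrow>
     (\<forall>a b. (a, b) \<in> M \<longrightarrow> a < b \<and> a \<in> P \<and> b \<in> P) \<and>
     (\<forall>p \<in> P. \<exists>a b. (a, b) \<in> M \<and> (p = a \<or> p = b)) \<and>
     (\<forall>a b c d. (a, b) \<in> M \<longrightarrow> (c, d) \<in> M \<longrightarrow> {a, b} \<inter> {c, d} \<noteq> {} \<longrightarrow> (a, b) = (c, d))"

lemma perfect_matching_onI:
  assumes "\<And>a b. (a, b) \<in> M \<Longrightarrow> a < b \<and> a \<in> P \<and> b \<in> P"
    and "\<And>p. p \<in> P \<Longrightarrow> \<exists>a b. (a, b) \<in> M \<and> (p = a \<or> p = b)"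
    and "\<And>a b c d. (a, b) \<in> M \<Longrightarrow> (c, d) \<in> M \<Longrightarrow> {a, b} \<inter> {c, d} \<noteq> {} \<Longrightarrow> (a, b) = (c, d)"
  shows "perfect_matching_on P M"
  using assms unfolding perfect_matching_on_def by blast

lemma perfect_matching_onD:
  assumes "perfect_matching_on P M" "(a, b) \<in> M"
  shows "a < b \<and> a \<in> P \<and> b \<in> P"
  using assms unfolding perfect_matching_on_def by blast

lemma perfect_matching_on_cover:
  assumes "perfect_matching_on P M" "p \<in> P"
  obtains a b where "(a, b) \<in> M" "p = a \<or> p = b"
  using assms unfolding perfect_matching_on_def by blast

lemma perfect_matching_on_arc_eq:
  assumes "perfect_matching_on P M" "(a, b) \<in> M" "(c, d) \<in> M" "{a, b} \<inter> {c, d} \<noteq> {}"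
  shows "(a, b) = (c, d)"
proof -
  have "\<forall>a b c d. (a, b) \<in> M \<longrightarrow> (c, d) \<in> M \<longrightarrow> {a, b} \<inter> {c, d} \<noteq> {} \<longrightarrow> (a, b) = (c, d)"
    using assms(1) unfolding perfect_matching_on_def by (elim conjE)
  then show ?thesis using assms(2-4) by (elim allE impE)
qed

lemma is_matching_iff_perfect_matching_on: "is_matching n M \<longleftrightarrow> perfect_matching_on {1..2 * n} M"
proof
  assume M: "is_matching n M"
  show "perfect_matching_on {1..2 * n} M"
  proof (rule perfect_matching_onI)
    show "a < b \<and> a \<in> {1..2 * n} \<and> b \<in> {1..2 * n}" if "(a, b) \<in> M" for a b
      using M that unfolding is_matching_def by auto
  next
    fix p assume "p \<in> {1..2 * n}"
    then obtain e where "e \<in> M" "fst e = p \<or> snd e = p" using M unfolding is_matching_def by blast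
    then show "\<exists>a b. (a, b) \<in> M \<and> (p = a \<or> p = b)" by (cases e) auto
  next
    fix a b c d assume ab: "(a, b) \<in> M" and cd: "(c, d) \<in> M" and "{a, b} \<inter> {c, d} \<noteq> {}"
    then obtain q where q: "q \<in> {a, b}" "q \<in> {c, d}" by blast
    have "q \<in> {1..2 * n}" using M ab q unfolding is_matching_def by auto
    then have "\<exists>!e. e \<in> M \<and> (fst e = q \<or> snd e = q)" using M unfolding is_matching_def by blast
    moreover have "(a, b) \<in> M \<and> (fst (a, b) = q \<or> snd (a, b) = q)"
      "(c, d) \<in> M \<and> (fst (c, d) = q \<or> snd (c, d) = q)"
      using ab cd q by auto
    ultimately show "(a, b) = (c, d)" by blast
  qed
next
  assume M: "perfect_matching_on {1..2 * n} M"
  have "\<exists>!e. e \<in> M \<and> (fst e = p \<or> snd e = p)" if p: "p \<in> {1..2 * n}" for p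
  proof -
    obtain a b where ab: "(a, b) \<in> M" "p = a \<or> p = b"
      using perfect_matching_on_cover[OF M p] by blast
    show ?thesis
    proof (rule ex1I[of _ "(a, b)"])
      fix e assume "e \<in> M \<and> (fst e = p \<or> snd e = p)"
      then show "e = (a, b)" using perfect_matching_on_arc_eq[OF M _ ab(1), of "fst e" "snd e"] ab(2)
        by auto
    qed (use ab in auto)
  qed
  moreover have "M \<subseteq> {(a, b). 1 \<le> a \<and> a < b \<and> b \<le> 2 * n}"
    using perfect_matching_onD[OF M] by fastforce
  ultimately show "is_matching n M" unfolding is_matching_def by blast
qed

lemma perfect_matching_on_image:
  assumes M: "perfect_matching_on P M" and f: "strict_mono_on P f"
  shows "perfect_matching_on (f ` P) (map_prod f f ` M)"
proof (rule perfect_matching_onI)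
  fix x y assume "(x, y) \<in> map_prod f f ` M"
  then obtain a b where "(a, b) \<in> M" "x = f a" "y = f b" by auto
  then show "x < y \<and> x \<in> f ` P \<and> y \<in> f ` P"
    using perfect_matching_onD[OF M] strict_mono_onD[OF f] by auto
next
  fix q assume "q \<in> f ` P"
  then obtain p where p: "p \<in> P" "q = f p" by blast
  obtain a b where "(a, b) \<in> M" "p = a \<or> p = b" using perfect_matching_on_cover[OF M p(1)] .
  then show "\<exists>x y. (x, y) \<in> map_prod f f ` M \<and> (q = x \<or> q = y)" using p(2) by force
next
  have inj: "inj_on f P" using f by (rule strict_mono_on_imp_inj_on)
  fix x y x' y'
  assume "(x, y) \<in> map_prod f f ` M" "(x', y') \<in> map_prod f f ` M" "{x, y} \<inter> {x', y'} \<noteq> {}"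
  then obtain a b c d where ab: "(a, b) \<in> M" and cd: "(c, d) \<in> M"
    and common: "{f a, f b} \<inter> {f c, f d} \<noteq> {}" and xy: "(x, y) = (f a, f b)" "(x', y') = (f c, f d)"
    by auto
  have "a \<in> P" "b \<in> P" "c \<in> P" "d \<in> P"
    using perfect_matching_onD[OF M ab] perfect_matching_onD[OF M cd] by auto
  then have "{a, b} \<inter> {c, d} \<noteq> {}" using common inj_onD[OF inj] by blast
  then show "(x, y) = (x', y')" using perfect_matching_on_arc_eq[OF M ab cd] xy by simp
qed

lemma perfect_matching_on_insert:
  assumes M: "perfect_matching_on P M" and "x \<notin> P" "y \<notin> P" "x < y"
  shows "perfect_matching_on (insert x (insert y P)) (insert (x, y) M)"
proof (rule perfect_matching_onI)
  fix p assume "p \<in> insert x (insert y P)"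
  then show "\<exists>a b. (a, b) \<in> insert (x, y) M \<and> (p = a \<or> p = b)"
    using perfect_matching_on_cover[OF M] by blast
next
  fix a b c d assume "(a, b) \<in> insert (x, y) M" "(c, d) \<in> insert (x, y) M" "{a, b} \<inter> {c, d} \<noteq> {}"
  then show "(a, b) = (c, d)"
    using assms perfect_matching_onD[OF M] perfect_matching_on_arc_eq[OF M] by blast
qed (use assms perfect_matching_onD[OF M] in auto)

lemma perfect_matching_on_Diff:
  assumes M: "perfect_matching_on P M" and xy: "(x, y) \<in> M"
  shows "perfect_matching_on (P - {x, y}) (M - {(x, y)})"
proof (rule perfect_matching_onI)
  fix a b assume "(a, b) \<in> M - {(x, y)}"
  then show "a < b \<and> a \<in> P - {x, y} \<and> b \<in> P - {x, y}"
    using perfect_matching_onD[OF M] perfect_matching_on_arc_eq[OF M _ xy, of a b] by auto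
next
  fix p assume "p \<in> P - {x, y}"
  then show "\<exists>a b. (a, b) \<in> M - {(x, y)} \<and> (p = a \<or> p = b)"
    using perfect_matching_on_cover[OF M] by blast
qed (use perfect_matching_on_arc_eq[OF M] in blast)

section \<open>Adding an arc at the first point\<close>

lemma is_matchingD: "is_matching n M \<Longrightarrow> (a, b) \<in> M \<Longrightarrow> 1 \<le> a \<and> a < b \<and> b \<le> 2 * n"
  unfolding is_matching_def by blast

lemma is_matching_first_arc:
  assumes M: "is_matching n M" and n: "1 \<le> n"
  obtains c where "(1, c) \<in> M" "2 \<le> c" "c \<le> 2 * n"
proof -
  have "perfect_matching_on {1..2 * n} M" "1 \<in> {1..2 * n}"
    using M n by (simp_all add: is_matching_iff_perfect_matching_on)
  then obtain a b where ab: "(a, b) \<in> M" "1 = a \<or> 1 = b" by (rule perfect_matching_on_cover)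
  then have "a = 1" using is_matchingD[OF M ab(1)] by auto
  then show thesis using that ab(1) is_matchingD[OF M ab(1)] by auto
qed

text \<open>
  Gap g of a matching on {1..2n} is the position between its points g and g + 1.
  The renumbering gap_shift g leaves the points 1 and g + 2 free, and add_first_arc g joins them.
\<close>

definition gap_shift :: "nat \<Rightarrow> nat \<Rightarrow> nat" where
  "gap_shift g x = (if x \<le> g then x + 1 else x + 2)"

definition add_first_arc :: "nat \<Rightarrow> (nat \<times> nat) set \<Rightarrow> (nat \<times> nat) set" where
  "add_first_arc g M = insert (1, g + 2) (map_prod (gap_shift g) (gap_shift g) ` M)"

lemma gap_shift_less_iff [simp]: "gap_shift g x < gap_shift g y \<longleftrightarrow> x < y"
  unfolding gap_shift_def by auto

lemma gap_shift_eq_iff [simp]: "gap_shift g x = gap_shift g y \<longleftrightarrow> x = y"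
  unfolding gap_shift_def by auto

lemma gap_shift_eq_Suc_iff: "gap_shift g y = Suc (gap_shift g x) \<longleftrightarrow> y = Suc x \<and> x \<noteq> g"
  unfolding gap_shift_def by auto

lemma less_gap_shift: "x < gap_shift g x"
  unfolding gap_shift_def by auto

lemma strict_mono_on_gap_shift: "strict_mono_on P (gap_shift g)"
  by (simp add: strict_mono_on_def monotone_on_def)

lemma gap_shift_image:
  assumes "g \<le> 2 * n"
  shows "gap_shift g ` {1..2 * n} = {2..2 * n + 2} - {g + 2}"
proof
  show "gap_shift g ` {1..2 * n} \<subseteq> {2..2 * n + 2} - {g + 2}" unfolding gap_shift_def by auto
next
  show "{2..2 * n + 2} - {g + 2} \<subseteq> gap_shift g ` {1..2 * n}"
  proof
    fix y assume y: "y \<in> {2..2 * n + 2} - {g + 2}"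
    then have "y = gap_shift g (if y \<le> g + 1 then y - 1 else y - 2)"
      and "(if y \<le> g + 1 then y - 1 else y - 2) \<in> {1..2 * n}"
      using assms unfolding gap_shift_def by auto
    then show "y \<in> gap_shift g ` {1..2 * n}" by blast
  qed
qed

lemma mem_add_first_arc:
  "(u, v) \<in> add_first_arc g M \<longleftrightarrow>
    (u, v) = (1, g + 2) \<or> (\<exists>a b. (a, b) \<in> M \<and> u = gap_shift g a \<and> v = gap_shift g b)"
  unfolding add_first_arc_def by auto

lemma is_matching_add_first_arc:
  assumes M: "is_matching n M" and g: "g \<le> 2 * n"
  shows "is_matching (n + 1) (add_first_arc g M)"
proof -
  have "perfect_matching_on (gap_shift g ` {1..2 * n}) (map_prod (gap_shift g) (gap_shift g) ` M)"
    using M strict_mono_on_gap_shift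
    by (intro perfect_matching_on_image) (simp_all add: is_matching_iff_perfect_matching_on)
  then have "perfect_matching_on (insert 1 (insert (g + 2) ({2..2 * n + 2} - {g + 2}))) (add_first_arc g M)"
    unfolding add_first_arc_def gap_shift_image[OF g] by (rule perfect_matching_on_insert) auto
  moreover have "insert 1 (insert (g + 2) ({2..2 * n + 2} - {g + 2})) = {1..2 * (n + 1)}"
    using g by auto
  ultimately show ?thesis by (simp add: is_matching_iff_perfect_matching_on)
qed

lemma gap_shift_neq_1:
  assumes "is_matching n M" "(a, b) \<in> M"
  shows "gap_shift g a \<noteq> 1"
  using is_matchingD[OF assms] less_gap_shift[of a g] by linarith

lemma Pair_1_mem_add_first_arc:
  assumes "is_matching n M"
  shows "(1, v) \<in> add_first_arc g M \<longleftrightarrow> v = g + 2"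
  using gap_shift_neq_1[OF assms] unfolding mem_add_first_arc by (metis prod.inject)

lemma add_first_arc_Diff:
  assumes "is_matching n M"
  shows "add_first_arc g M - {(1, g + 2)} = map_prod (gap_shift g) (gap_shift g) ` M"
  using gap_shift_neq_1[OF assms] unfolding add_first_arc_def by force

lemma add_first_arc_inj:
  assumes M: "is_matching n M" and M': "is_matching n' M'"
    and eq: "add_first_arc g M = add_first_arc g' M'"
  shows "M = M' \<and> g = g'"
proof -
  have "(1, g + 2) \<in> add_first_arc g' M'" using eq Pair_1_mem_add_first_arc[OF M] by blast
  then have g: "g = g'" using Pair_1_mem_add_first_arc[OF M'] by simp
  have "map_prod (gap_shift g) (gap_shift g) ` M = map_prod (gap_shift g) (gap_shift g) ` M'"
    using add_first_arc_Diff[OF M] add_first_arc_Diff[OF M'] eq g by metis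
  moreover have "inj (map_prod (gap_shift g) (gap_shift g))"
    by (simp add: map_prod_inj_on inj_on_def)
  ultimately show ?thesis using g by (simp add: inj_image_eq_iff)
qed

lemma add_first_arc_surj:
  assumes N: "is_matching (n + 1) N"
  obtains M g where "is_matching n M" "g \<le> 2 * n" "N = add_first_arc g M"
proof -
  obtain c where c: "(1, c) \<in> N" "2 \<le> c" "c \<le> 2 * n + 2"
    using is_matching_first_arc[OF N] by auto
  define g where "g = c - 2"
  define Q where "Q = {1..2 * n + 2} - {1, c}"
  define u where "u x = (if x < c then x - 1 else x - 2)" for x \<comment> \<open>inverse of gap_shift g on Q\<close>
  define M where "M = map_prod u u ` (N - {(1, c)})"
  have Q: "perfect_matching_on Q (N - {(1, c)})"
    unfolding Q_def using N c(1) perfect_matching_on_Diff by (simp add: is_matching_iff_perfect_matching_on)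
  have "strict_mono_on Q u" unfolding strict_mono_on_def monotone_on_def Q_def u_def by auto
  moreover have "u ` Q = {1..2 * n}"
  proof
    show "u ` Q \<subseteq> {1..2 * n}" unfolding Q_def u_def using c by auto
  next
    show "{1..2 * n} \<subseteq> u ` Q"
    proof
      fix y assume "y \<in> {1..2 * n}"
      then have "(if y + 1 < c then y + 1 else y + 2) \<in> Q" "y = u (if y + 1 < c then y + 1 else y + 2)"
        using c unfolding Q_def u_def by auto
      then show "y \<in> u ` Q" by blast
    qed
  qed
  ultimately have "is_matching n M"
    using perfect_matching_on_image[OF Q] unfolding M_def is_matching_iff_perfect_matching_on by metis
  have "gap_shift g (u x) = x" if "x \<in> Q" for x
    using that c unfolding gap_shift_def u_def g_def Q_def by auto
  then have "map_prod (gap_shift g) (gap_shift g) (map_prod u u e) = e" if "e \<in> N - {(1, c)}" for e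
    using that perfect_matching_onD[OF Q, of "fst e" "snd e"] by (cases e) simp
  then have "map_prod (gap_shift g) (gap_shift g) ` M = (\<lambda>e. e) ` (N - {(1, c)})"
    unfolding M_def image_image by (rule image_cong[OF refl])
  moreover have "g + 2 = c" using c g_def by simp
  ultimately have "N = add_first_arc g M"
    unfolding add_first_arc_def using c(1) by (simp add: insert_absorb)
  moreover have "g \<le> 2 * n" using c g_def by simp
  ultimately show thesis using that \<open>is_matching n M\<close> by blast
qed

lemma bij_betw_add_first_arc:
  "bij_betw (\<lambda>(M, g). add_first_arc g M) ({M. is_matching n M} \<times> {..2 * n}) {N. is_matching (n + 1) N}"
proof (rule bij_betw_imageI)
  show "inj_on (\<lambda>(M, g). add_first_arc g M) ({M. is_matching n M} \<times> {..2 * n})"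
  proof (rule inj_onI, clarify)
    fix M g M' g'
    assume "is_matching n M" "is_matching n M'" "add_first_arc g M = add_first_arc g' M'"
    then show "M = M' \<and> g = g'" by (rule add_first_arc_inj)
  qed
  show "(\<lambda>(M, g). add_first_arc g M) ` ({M. is_matching n M} \<times> {..2 * n}) = {N. is_matching (n + 1) N}"
  proof (intro equalityI subsetI)
    fix N assume "N \<in> {N. is_matching (n + 1) N}"
    then obtain M g where "is_matching n M" "g \<le> 2 * n" "N = add_first_arc g M"
      using add_first_arc_surj by blast
    then show "N \<in> (\<lambda>(M, g). add_first_arc g M) ` ({M. is_matching n M} \<times> {..2 * n})" by force
  next
    fix N assume "N \<in> (\<lambda>(M, g). add_first_arc g M) ` ({M. is_matching n M} \<times> {..2 * n})"
    then show "N \<in> {N. is_matching (n + 1) N}" using is_matching_add_first_arc by auto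
  qed
qed

section \<open>Pattern occurrences under adding an arc\<close>

text \<open>
  (i, j) stands for the pair of arcs (i + 1, j + 1 + p), (i + 2, j + 2 - p):
  p = 0 encodes the pattern 12 and p = 1 the pattern 21.
\<close>

definition occs :: "nat \<Rightarrow> (nat \<times> nat) set \<Rightarrow> (nat \<times> nat) set" where
  "occs p M = {(i, j). (i + 1, j + 1 + p) \<in> M \<and> (i + 2, j + 2 - p) \<in> M}"

definition occs_cut :: "nat \<Rightarrow> (nat \<times> nat) set \<Rightarrow> nat \<Rightarrow> (nat \<times> nat) set" where
  "occs_cut p M g = {(i, j) \<in> occs p M. g = i + 1 \<or> g = j + 1}"

definition shift_occ :: "nat \<Rightarrow> nat \<times> nat \<Rightarrow> nat \<times> nat" where
  "shift_occ g = (\<lambda>(i, j). (gap_shift g (i + 1) - 1, gap_shift g (j + 1) - 1))"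

lemma mem_occs: "(i, j) \<in> occs p M \<longleftrightarrow> (i + 1, j + 1 + p) \<in> M \<and> (i + 2, j + 2 - p) \<in> M"
  unfolding occs_def by simp

lemma occ21_eq_card_occs: "occ21 M = card (occs 1 M)"
  unfolding occ21_def occs_def by simp

lemma occ12_eq_card_occs: "occ12 M = card (occs 0 M)"
  unfolding occ12_def occs_def by simp

lemma finite_occs:
  assumes "is_matching n M"
  shows "finite (occs p M)"
proof (rule finite_subset)
  show "occs p M \<subseteq> {..2 * n} \<times> {..2 * n}"
    unfolding occs_def using is_matchingD[OF assms] by fastforce
qed simp

lemma occs_cut_subset: "occs_cut p M g \<subseteq> occs p M"
  unfolding occs_cut_def by auto

lemma occs_eq_if_common_point:
  assumes M: "is_matching n M" and p: "p \<le> 1"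
    and x: "(i, j) \<in> occs p M" and y: "(i', j') \<in> occs p M"
    and common: "{i + 1, j + 1} \<inter> {i' + 1, j' + 1} \<noteq> {}"
  shows "(i, j) = (i', j')"
proof -
  have P: "perfect_matching_on {1..2 * n} M" using M by (simp add: is_matching_iff_perfect_matching_on)
  have A: "(i + 1, j + 1 + p) \<in> M" "(i + 2, j + 2 - p) \<in> M"
    and A': "(i' + 1, j' + 1 + p) \<in> M" "(i' + 2, j' + 2 - p) \<in> M"
    using x y unfolding occs_def by auto
  consider "p = 0" | "p = 1" using p by arith
  then show ?thesis
  proof cases
    case 1
    then show ?thesis using perfect_matching_on_arc_eq[OF P A(1) A'(1)] common by auto
  next
    case 2
    then show ?thesis
      using perfect_matching_on_arc_eq[OF P A(1) A'(1)] perfect_matching_on_arc_eq[OF P A(2) A'(2)]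
        perfect_matching_on_arc_eq[OF P A(1) A'(2)] perfect_matching_on_arc_eq[OF P A(2) A'(1)]
        is_matchingD[OF M A(1)] is_matchingD[OF M A'(1)] common
      by auto
  qed
qed

lemma card_occs_cut_le_1:
  assumes "is_matching n M" "p \<le> 1"
  shows "card (occs_cut p M g) \<le> 1"
proof -
  have "finite (occs_cut p M g)"
    using finite_occs[OF assms(1)] occs_cut_subset by (rule finite_subset[rotated])
  moreover have "x = y" if "x \<in> occs_cut p M g" "y \<in> occs_cut p M g" for x y
    using that occs_eq_if_common_point[OF assms, of "fst x" "snd x" "fst y" "snd y"]
    unfolding occs_cut_def by auto
  ultimately show ?thesis by (simp add: card_le_Suc0_iff_eq)
qed

lemma occs_cut_eq_empty:
  assumes M: "is_matching n M" and p: "p \<le> 1" and new: "(1, g + 1 - p) \<in> M"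
  shows "occs_cut p M g = {}"
proof -
  have P: "perfect_matching_on {1..2 * n} M" using M by (simp add: is_matching_iff_perfect_matching_on)
  have False if "(i, j) \<in> occs_cut p M g" for i j
  proof -
    have A: "(i + 1, j + 1 + p) \<in> M" "(i + 2, j + 2 - p) \<in> M" and g: "g = i + 1 \<or> g = j + 1"
      using that unfolding occs_cut_def occs_def by auto
    consider "p = 0" | "p = 1" using p by arith
    then show False
    proof cases
      case 1
      then show False using perfect_matching_on_arc_eq[OF P A(2) new] g by auto
    next
      case 2
      then show False
        using perfect_matching_on_arc_eq[OF P A(1) new] perfect_matching_on_arc_eq[OF P A(2) new] g
        by auto
    qed
  qed
  then show ?thesis by auto
qed

lemma Pair_0_mem_occs_add_first_arc:
  assumes M: "is_matching n M" and p: "p \<le> 1"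
  shows "(0, j) \<in> occs p (add_first_arc g M) \<longleftrightarrow> j = g + 1 - p \<and> (1, g + 1 - p) \<in> M"
proof
  assume "(0, j) \<in> occs p (add_first_arc g M)"
  then have first: "(1, j + 1 + p) \<in> add_first_arc g M" and second: "(2, j + 2 - p) \<in> add_first_arc g M"
    using mem_occs[of 0 j p] by (simp_all add: numeral_2_eq_2)
  from first have j: "j = g + 1 - p" using Pair_1_mem_add_first_arc[OF M] by simp
  from second obtain a b where ab: "(a, b) \<in> M" "gap_shift g a = 2" "gap_shift g b = j + 2 - p"
    unfolding mem_add_first_arc by auto
  have "a = 1" using ab(2) is_matchingD[OF M ab(1)] unfolding gap_shift_def by (auto split: if_splits)
  moreover have "b = g + 1 - p" using ab(3) j p unfolding gap_shift_def by (auto split: if_splits)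
  ultimately show "j = g + 1 - p \<and> (1, g + 1 - p) \<in> M" using ab(1) j by simp
next
  assume "j = g + 1 - p \<and> (1, g + 1 - p) \<in> M"
  then have j: "j = g + 1 - p" and new: "(1, g + 1 - p) \<in> M" by auto
  have "1 + p \<le> g" using is_matchingD[OF M new] p by auto
  then have "(1, j + 1 + p) = (1, g + 2)"
    and "(2, j + 2 - p) = (gap_shift g 1, gap_shift g (g + 1 - p))"
    using j p unfolding gap_shift_def by auto
  then show "(0, j) \<in> occs p (add_first_arc g M)"
    using new unfolding mem_occs mem_add_first_arc by auto
qed

lemma shift_occ_mem_occs_add_first_arc:
  assumes p: "p \<le> 1" and x: "x \<in> occs p M - occs_cut p M g"
  shows "shift_occ g x \<in> occs p (add_first_arc g M)"
proof -
  obtain i j where ij: "x = (i, j)" by fastforce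
  define I J where "I = gap_shift g (i + 1)" and "J = gap_shift g (j + 1)"
  have A: "(i + 1, j + 1 + p) \<in> M" "(i + 2, j + 2 - p) \<in> M" and cut: "g \<noteq> i + 1" "g \<noteq> j + 1"
    using x unfolding ij occs_cut_def occs_def by auto
  have "gap_shift g (i + 2) = I + 1" "gap_shift g (j + 2) = J + 1"
    using cut unfolding I_def J_def by (simp_all add: gap_shift_eq_Suc_iff)
  moreover have "gap_shift g (j + 1 + p) = J + p" "gap_shift g (j + 2 - p) = J + 1 - p"
    using calculation(2) p unfolding J_def by (cases p; simp)+
  moreover have "(I, gap_shift g (j + 1 + p)) \<in> add_first_arc g M"
    "(gap_shift g (i + 2), gap_shift g (j + 2 - p)) \<in> add_first_arc g M"
    using A unfolding add_first_arc_def I_def J_def by auto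
  moreover have "1 \<le> I" "1 \<le> J"
    using less_gap_shift[of "i + 1" g] less_gap_shift[of "j + 1" g] unfolding I_def J_def by auto
  moreover have "shift_occ g x = (I - 1, J - 1)" unfolding ij shift_occ_def I_def J_def by simp
  ultimately show ?thesis by (simp add: mem_occs)
qed

lemma mem_occs_add_first_arc_imp_shift_occ:
  assumes M: "is_matching n M" and p: "p \<le> 1"
    and occ: "(i, j) \<in> occs p (add_first_arc g M)" and i: "i \<noteq> 0"
  shows "(i, j) \<in> shift_occ g ` (occs p M - occs_cut p M g)"
proof -
  obtain a b a' b' where ab: "(a, b) \<in> M" "gap_shift g a = i + 1" "gap_shift g b = j + 1 + p"
    and ab': "(a', b') \<in> M" "gap_shift g a' = i + 2" "gap_shift g b' = j + 2 - p"
    using occ i unfolding mem_occs mem_add_first_arc by auto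
  have a': "a' = a + 1" "a \<noteq> g" using ab(2) ab'(2) gap_shift_eq_Suc_iff[of g a' a] by auto
  have pos: "1 \<le> a" "1 \<le> b" "1 \<le> b'" using is_matchingD[OF M ab(1)] is_matchingD[OF M ab'(1)] by auto
  consider "p = 0" | "p = 1" using p by arith
  then show ?thesis
  proof cases
    case 1
    then have "b' = b + 1" "b \<noteq> g" using ab(3) ab'(3) gap_shift_eq_Suc_iff[of g b' b] by auto
    then have "(a - 1, b - 1) \<in> occs p M - occs_cut p M g" "shift_occ g (a - 1, b - 1) = (i, j)"
      using 1 ab ab' a' pos by (auto simp: occs_cut_def mem_occs shift_occ_def)
    then show ?thesis by (metis image_eqI)
  next
    case 2
    then have "b = b' + 1" "b' \<noteq> g" using ab(3) ab'(3) gap_shift_eq_Suc_iff[of g b b'] by auto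
    then have "(a - 1, b' - 1) \<in> occs p M - occs_cut p M g" "shift_occ g (a - 1, b' - 1) = (i, j)"
      using 2 ab ab' a' pos by (auto simp: occs_cut_def mem_occs shift_occ_def)
    then show ?thesis by (metis image_eqI)
  qed
qed

lemma occs_add_first_arc:
  assumes M: "is_matching n M" and p: "p \<le> 1"
  shows "occs p (add_first_arc g M) =
    (if (1, g + 1 - p) \<in> M then {(0, g + 1 - p)} else {}) \<union> shift_occ g ` (occs p M - occs_cut p M g)"
proof (intro equalityI subsetI)
  fix x assume x: "x \<in> occs p (add_first_arc g M)"
  obtain i j where ij: "x = (i, j)" by fastforce
  show "x \<in> (if (1, g + 1 - p) \<in> M then {(0, g + 1 - p)} else {}) \<union> shift_occ g ` (occs p M - occs_cut p M g)"
  proof (cases "i = 0")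
    case True
    then show ?thesis using x Pair_0_mem_occs_add_first_arc[OF M p] unfolding ij by auto
  next
    case False
    then show ?thesis using x mem_occs_add_first_arc_imp_shift_occ[OF M p] unfolding ij by blast
  qed
next
  fix x
  assume "x \<in> (if (1, g + 1 - p) \<in> M then {(0, g + 1 - p)} else {}) \<union> shift_occ g ` (occs p M - occs_cut p M g)"
  then show "x \<in> occs p (add_first_arc g M)"
    using Pair_0_mem_occs_add_first_arc[OF M p] shift_occ_mem_occs_add_first_arc[OF p]
    by (auto split: if_splits)
qed

lemma occs_bounds:
  assumes "is_matching n M" "p \<le> 1" "(i, j) \<in> occs p M"
  shows "i < j \<and> j + 2 \<le> 2 * n"
  using assms(3) is_matchingD[OF assms(1), of "i + 1" "j + 1 + p"]
    is_matchingD[OF assms(1), of "i + 2" "j + 2 - p"] assms(2)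
  unfolding mem_occs by auto

lemma inj_shift_occ: "inj (shift_occ g)"
proof (rule injI)
  fix x y assume "shift_occ g x = shift_occ g y"
  then have "gap_shift g (fst x + 1) - 1 = gap_shift g (fst y + 1) - 1"
    "gap_shift g (snd x + 1) - 1 = gap_shift g (snd y + 1) - 1"
    unfolding shift_occ_def by (simp_all add: case_prod_beta)
  moreover have "0 < gap_shift g z" for z using less_gap_shift[of z g] by simp
  ultimately have "gap_shift g (fst x + 1) = gap_shift g (fst y + 1)"
    "gap_shift g (snd x + 1) = gap_shift g (snd y + 1)"
    by (metis Suc_pred')+
  then show "x = y" by (simp add: prod_eq_iff)
qed

lemma fst_shift_occ_pos: "0 < fst (shift_occ g x)"
  using less_gap_shift[of "fst x + 1" g] unfolding shift_occ_def by (simp add: case_prod_beta)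

lemma card_occs_add_first_arc:
  assumes M: "is_matching n M" and p: "p \<le> 1"
  shows "int (card (occs p (add_first_arc g M))) =
    of_bool ((1, g + 1 - p) \<in> M) + int (card (occs p M)) - int (card (occs_cut p M g))"
proof -
  have fin: "finite (occs p M)" by (rule finite_occs[OF M])
  have disjoint: "(if (1, g + 1 - p) \<in> M then {(0, g + 1 - p)} else {}) \<inter>
      shift_occ g ` (occs p M - occs_cut p M g) = {}"
  proof -
    have "(0, j) \<notin> shift_occ g ` A" for j A
      using fst_shift_occ_pos by (metis fst_conv image_iff less_irrefl)
    then show ?thesis by auto
  qed
  have "card (shift_occ g ` (occs p M - occs_cut p M g)) = card (occs p M - occs_cut p M g)"
    using inj_shift_occ by (rule card_image[OF inj_on_subset]) simp
  also have "\<dots> = card (occs p M) - card (occs_cut p M g)"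
    using finite_subset[OF occs_cut_subset fin] occs_cut_subset by (rule card_Diff_subset)
  moreover have "card (occs_cut p M g) \<le> card (occs p M)"
    using fin occs_cut_subset by (rule card_mono)
  ultimately show ?thesis
    using disjoint fin by (simp add: occs_add_first_arc[OF M p] card_Un_disjoint of_nat_diff)
qed

lemma card_filter_eq_sum: "finite A \<Longrightarrow> card {x \<in> A. P x} = (\<Sum>x\<in>A. if P x then 1 else 0)"
  by (simp only: card_eq_sum sum.inter_filter)

lemma sum_card_occs_cut:
  assumes M: "is_matching n M" and p: "p \<le> 1"
  shows "(\<Sum>g\<le>2 * n. card (occs_cut p M g)) = 2 * card (occs p M)"
proof -
  have "occs_cut p M g = {x \<in> occs p M. g = fst x + 1 \<or> g = snd x + 1}" for g
    unfolding occs_cut_def by auto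
  then have "(\<Sum>g\<le>2 * n. card (occs_cut p M g)) =
      (\<Sum>g\<le>2 * n. \<Sum>x\<in>occs p M. if g = fst x + 1 \<or> g = snd x + 1 then 1 else 0)"
    using card_filter_eq_sum[OF finite_occs[OF M]] by presburger
  also have "\<dots> = (\<Sum>x\<in>occs p M. \<Sum>g\<le>2 * n. if g = fst x + 1 \<or> g = snd x + 1 then 1 else 0)"
    by (rule sum.swap)
  also have "\<dots> = (\<Sum>x\<in>occs p M. 2)"
  proof (rule sum.cong[OF refl])
    fix x assume x: "x \<in> occs p M"
    then have "fst x < snd x \<and> snd x + 2 \<le> 2 * n"
      using occs_bounds[OF M p, of "fst x" "snd x"] by simp
    then have "{g \<in> {..2 * n}. g = fst x + 1 \<or> g = snd x + 1} = {fst x + 1, snd x + 1}"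
      and "card {fst x + 1, snd x + 1} = 2" by auto
    then show "(\<Sum>g\<le>2 * n. if g = fst x + 1 \<or> g = snd x + 1 then 1 else 0) = (2 :: nat)"
      using card_filter_eq_sum[OF finite_atMost] by metis
  qed
  finally show ?thesis by simp
qed

lemma card_new_occ_gaps:
  assumes M: "is_matching n M" and p: "p \<le> 1"
  shows "card {g. g \<le> 2 * n \<and> (1, g + 1 - p) \<in> M} = of_bool (1 \<le> n)"
proof (cases "n = 0")
  case True
  then show ?thesis using is_matchingD[OF M] by fastforce
next
  case False
  then obtain c where c: "(1, c) \<in> M" "2 \<le> c" "c \<le> 2 * n"
    using is_matching_first_arc[OF M] by auto
  have P: "perfect_matching_on {1..2 * n} M" using M by (simp add: is_matching_iff_perfect_matching_on)
  have "{g. g \<le> 2 * n \<and> (1, g + 1 - p) \<in> M} = {c + p - 1}"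
  proof (intro equalityI subsetI)
    fix g assume "g \<in> {g. g \<le> 2 * n \<and> (1, g + 1 - p) \<in> M}"
    then have "g + 1 - p = c" using perfect_matching_on_arc_eq[OF P _ c(1), of 1 "g + 1 - p"] by auto
    then show "g \<in> {c + p - 1}" using c(2) p by auto
  qed (use c p in auto)
  then show ?thesis using False by simp
qed

lemma card_gaps_occs_add_first_arc:
  assumes M: "is_matching n M" and p: "p \<le> 1"
  defines "m \<equiv> int (card (occs p M))"
  shows "int (card {g. g \<le> 2 * n \<and> int (card (occs p (add_first_arc g M))) = k}) =
    of_bool (1 \<le> n) * of_bool (m = k - 1) + (2 * int n + 1 - of_bool (1 \<le> n) - 2 * k) * of_bool (m = k)
    + 2 * (k + 1) * of_bool (m = k + 1)"
proof -
  define new :: "nat \<Rightarrow> int" where "new g = of_bool ((1, g + 1 - p) \<in> M)" for g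
  define cut :: "nat \<Rightarrow> int" where "cut g = int (card (occs_cut p M g))" for g
  have indicator: "of_bool (int (card (occs p (add_first_arc g M))) = k) =
      new g * of_bool (m = k - 1) + (1 - new g - cut g) * of_bool (m = k) + cut g * of_bool (m = k + 1)"
    for g
  proof -
    have "cut g = 0 \<or> cut g = 1" using card_occs_cut_le_1[OF M p, of g] unfolding cut_def by auto
    moreover have "new g = 1 \<Longrightarrow> cut g = 0"
      using occs_cut_eq_empty[OF M p] unfolding new_def cut_def by (auto split: if_splits)
    ultimately show ?thesis
      unfolding card_occs_add_first_arc[OF M p] m_def[symmetric] new_def[symmetric] cut_def[symmetric]
      by (auto simp: new_def)
  qed
  have sum_new: "(\<Sum>g\<le>2 * n. new g) = of_bool (1 \<le> n)"
    using card_new_occ_gaps[OF M p] unfolding new_def by (simp add: Int_def)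
  have sum_cut: "(\<Sum>g\<le>2 * n. cut g) = 2 * m"
    using sum_card_occs_cut[OF M p] unfolding cut_def m_def by (simp flip: of_nat_sum)
  have "int (card {g. g \<le> 2 * n \<and> int (card (occs p (add_first_arc g M))) = k}) =
      (\<Sum>g\<le>2 * n. of_bool (int (card (occs p (add_first_arc g M))) = k))"
    by (simp add: Int_def)
  also have "\<dots> = (\<Sum>g\<le>2 * n. new g) * of_bool (m = k - 1)
      + (int (card {..2 * n}) - (\<Sum>g\<le>2 * n. new g) - (\<Sum>g\<le>2 * n. cut g)) * of_bool (m = k)
      + (\<Sum>g\<le>2 * n. cut g) * of_bool (m = k + 1)"
    unfolding indicator by (simp add: sum.distrib sum_subtractf sum_distrib_right)
  finally show ?thesis unfolding sum_new sum_cut by auto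
qed

section \<open>The recurrence\<close>

definition pattern_count :: "nat \<Rightarrow> nat \<Rightarrow> int \<Rightarrow> int" where
  "pattern_count p n k = int (card {M. is_matching n M \<and> int (card (occs p M)) = k})"

lemma a21_eq_pattern_count: "a21 n k = pattern_count 1 n k"
  unfolding a21_def pattern_count_def occ21_eq_card_occs ..

lemma a12_eq_pattern_count: "a12 n k = pattern_count 0 n k"
  unfolding a12_def pattern_count_def occ12_eq_card_occs ..

lemma finite_matchings: "finite {M. is_matching n M}"
proof (rule finite_subset)
  show "{M. is_matching n M} \<subseteq> Pow ({1..2 * n} \<times> {1..2 * n})"
    using is_matchingD by fastforce
qed simp

lemma is_matching_0_iff: "is_matching 0 M \<longleftrightarrow> M = {}"
proof
  assume M: "is_matching 0 M"
  have "x \<notin> M" for x using is_matchingD[OF M, of "fst x" "snd x"] by auto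
  then show "M = {}" by blast
qed (simp add: is_matching_def)

lemma pattern_count_0: "pattern_count p 0 k = of_bool (k = 0)"
proof -
  have "occs p {} = {}" by (simp add: occs_def)
  then have "{M. is_matching 0 M \<and> int (card (occs p M)) = k} = (if k = 0 then {{}} else {})"
    unfolding is_matching_0_iff by auto
  then show ?thesis unfolding pattern_count_def by simp
qed

lemma pattern_count_Suc:
  assumes p: "p \<le> 1"
  shows "pattern_count p (n + 1) k =
    of_bool (1 \<le> n) * pattern_count p n (k - 1) + (2 * int n + 1 - of_bool (1 \<le> n) - 2 * k) * pattern_count p n k
    + 2 * (k + 1) * pattern_count p n (k + 1)"
proof -
  let ?Mat = "{M. is_matching n M}"
  let ?gaps = "\<lambda>M. {g. g \<le> 2 * n \<and> int (card (occs p (add_first_arc g M))) = k}"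
  let ?m = "\<lambda>M. int (card (occs p M))"
  have count: "(\<Sum>M\<in>?Mat. of_bool (?m M = j)) = pattern_count p n j" for j
    unfolding pattern_count_def using finite_matchings by (simp add: Int_def)
  let ?f = "\<lambda>(M, g). add_first_arc g M"
  have "bij_betw ?f {x \<in> ?Mat \<times> {..2 * n}. int (card (occs p (?f x))) = k}
      {N \<in> {N. is_matching (n + 1) N}. int (card (occs p N)) = k}"
    by (rule bij_betw_Collect[OF bij_betw_add_first_arc]) simp
  moreover have "{x \<in> ?Mat \<times> {..2 * n}. int (card (occs p (?f x))) = k} = (SIGMA M:?Mat. ?gaps M)"
    by auto
  ultimately have "pattern_count p (n + 1) k = int (card (SIGMA M:?Mat. ?gaps M))"
    unfolding pattern_count_def by (simp add: bij_betw_same_card)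
  also have "\<dots> = (\<Sum>M\<in>?Mat. int (card (?gaps M)))"
    using finite_matchings by (simp add: of_nat_sum)
  also have "\<dots> = (\<Sum>M\<in>?Mat. of_bool (1 \<le> n) * of_bool (?m M = k - 1)
      + (2 * int n + 1 - of_bool (1 \<le> n) - 2 * k) * of_bool (?m M = k) + 2 * (k + 1) * of_bool (?m M = k + 1))"
    using card_gaps_occs_add_first_arc[OF _ p] by simp
  also have "\<dots> = of_bool (1 \<le> n) * (\<Sum>M\<in>?Mat. of_bool (?m M = k - 1))
      + (2 * int n + 1 - of_bool (1 \<le> n) - 2 * k) * (\<Sum>M\<in>?Mat. of_bool (?m M = k))
      + 2 * (k + 1) * (\<Sum>M\<in>?Mat. of_bool (?m M = k + 1))"
    by (simp add: sum.distrib sum_distrib_left)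
  finally show ?thesis unfolding count .
qed

lemma pattern_count_1:
  assumes "p \<le> 1"
  shows "pattern_count p 1 k = of_bool (k = 0)"
  using pattern_count_Suc[OF assms, of 0 k] by (simp add: pattern_count_0) linarith

lemma pattern_count_0_eq_1: "pattern_count 0 n k = pattern_count 1 n k"
proof (induction n arbitrary: k)
  case (Suc n)
  then show ?case using pattern_count_Suc[of 0 n k] pattern_count_Suc[of 1 n k] by simp
qed (simp add: pattern_count_0)

theorem theorem1:
  shows "(\<forall>n k. a12 n k = a21 n k)
    \<and> (\<forall>n k. n \<ge> 1 \<longrightarrow>
         a21 (n + 1) k = a21 n (k - 1) + 2 * (int n - k) * a21 n k + 2 * (k + 1) * a21 n (k + 1))
    \<and> a21 1 0 = 1 \<and> (\<forall>k. k \<noteq> 0 \<longrightarrow> a21 1 k = 0)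
    \<and> (\<forall>n k. k < 0 \<longrightarrow> a21 n k = 0)"
proof (intro conjI allI impI)
  fix n k
  show "a12 n k = a21 n k"
    by (simp add: a12_eq_pattern_count a21_eq_pattern_count pattern_count_0_eq_1)
next
  fix n :: nat and k :: int
  assume "n \<ge> 1"
  then show "a21 (n + 1) k = a21 n (k - 1) + 2 * (int n - k) * a21 n k + 2 * (k + 1) * a21 n (k + 1)"
    unfolding a21_eq_pattern_count pattern_count_Suc[OF order_refl] by (simp add: algebra_simps)
next
  show "a21 1 0 = 1" unfolding a21_eq_pattern_count pattern_count_1[OF order_refl] by simp
next
  fix k :: int
  assume "k \<noteq> 0"
  then show "a21 1 k = 0" unfolding a21_eq_pattern_count pattern_count_1[OF order_refl] by simp
next
  fix n :: nat and k :: int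
  assume "k < 0"
  then show "a21 n k = 0" unfolding a21_def by simp
qed

end
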